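(* Assume $\sigma_1(x)=\sigma_1'(0)x$ with $\sigma_1'(0)\ne0$, so that $\sigma_2(x)=\tfrac12\sigma_2''(0)x^2+\sigma_2'(0)x=\tfrac12\sigma_2''(0)\,x(x-a_2)$ with $\tfrac12\sigma_2''(0)=q(1-q^{-1})\tau'(0)$ and $\sigma_2'(0)=q[\sigma_1'(0)+(1-q^{-1})\tau(0)]\ne0$. Let $\Lambda_q=\tau'(0)/\sigma_1'(0)$ and $y_0=q^{-1}\Big[1+\frac{(1-q^{-1})\tau(0)}{\sigma_1'(0)}\Big]$, and assume $\Lambda_q<0$, $a_2<0$ and $0<qy_0<1$. Let $$\rho(x)=|x|^{\alpha}\frac{1}{(x/a_2;q)_\infty},\qquad q^{\alpha}=-\frac{q^{-2}\tfrac12\sigma_2''(0)a_2}{\sigma_1'(0)}.$$ Then there exist polynomials $P_n$, $n\in\mathbb{N}_0$, with $P_n$ of degree $n$ a solution of the q-EHT with $\lambda=\lambda_n$, and nonzero constants $d_n^2$, such that for all $m,n\in\mathbb{N}_0$ $$\int_0^{\infty}P_n(x)P_m(x)\rho(x)\,d_qx=d_n^2\delta_{mn},$$ i.e. orthogonality with respect to $\rho$ supported on $\{q^{\pm k}\}_{k\in\mathbb{N}_0}$.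
   Context: Throughout $0<q<1$. For a function $y$ and $\zeta\in\{q,q^{-1}\}$, $D_\zeta y(x)=\frac{y(x)-y(\zeta x)}{(1-\zeta)x}$ for $x\ne0$ and $D_\zeta y(0)=y'(0)$; $[n]_q=\frac{1-q^n}{1-q}$. Let $\sigma_1$ be a real polynomial of degree at most two, $\tau(x)=\tau'(0)x+\tau(0)$ a real polynomial with $\tau'(0)\ne0$, and $\sigma_2(x):=q[\sigma_1(x)+(1-q^{-1})x\tau(x)]$. The q-EHT with parameter $n$ is $\sigma_1(x)D_{q^{-1}}D_qy(x)+\tau(x)D_qy(x)+\lambda_ny(x)=0$, $\lambda_n=-[n]_q\big(\tau'(0)+\tfrac12[n-1]_{q^{-1}}\sigma_1''(0)\big)$. $(\beta;q)_\infty=\prod_{k\ge0}(1-\beta q^k)$. For $q^\alpha=c$ ($c\ne0$), $\alpha$ is any complex number with $e^{\alpha\ln q}=c$ and $|x|^\alpha:=e^{\alpha\ln|x|}$. The improper $q$-Jackson integral is $\int_0^\infty f(x)\,d_qx=(1-q)\sum_{j=-\infty}^{\infty}q^jf(q^j)$. *)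

theory Defs
  imports "HOL-Analysis.Analysis" "HOL-Computational_Algebra.Polynomial"
begin

definition qD :: "real \<Rightarrow> (real \<Rightarrow> real) \<Rightarrow> real \<Rightarrow> real" where
  "qD \<zeta> y x = (if x = 0 then deriv y 0 else (y x - y (\<zeta> * x)) / ((1 - \<zeta>) * x))"

definition qnum :: "real \<Rightarrow> int \<Rightarrow> real" where
  "qnum q k = (1 - q powi k) / (1 - q)"

definition sigma2 :: "real \<Rightarrow> real poly \<Rightarrow> real poly \<Rightarrow> real poly" where
  "sigma2 q \<sigma>1 \<tau> = smult q (\<sigma>1 + [:0, 1 - 1/q:] * \<tau>)"

text \<open>lambda_n = -[n]_q (tau'(0) + 1/2 [n-1]_{q^{-1}} sigma_1''(0)); note sigma_1''(0) = 2 * coeff sigma_1 2.\<close>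
definition qEHT_lambda :: "real \<Rightarrow> real poly \<Rightarrow> real poly \<Rightarrow> nat \<Rightarrow> real" where
  "qEHT_lambda q \<sigma>1 \<tau> n =
     - qnum q (int n) * (coeff \<tau> 1 + (1/2) * qnum (1/q) (int n - 1) * (2 * coeff \<sigma>1 2))"

definition qEHT_solution :: "real \<Rightarrow> real poly \<Rightarrow> real poly \<Rightarrow> real \<Rightarrow> (real \<Rightarrow> real) \<Rightarrow> bool" where
  "qEHT_solution q \<sigma>1 \<tau> lam y \<longleftrightarrow>
     (\<forall>x. poly \<sigma>1 x * qD (1/q) (qD q y) x + poly \<tau> x * qD q y x + lam * y x = 0)"

definition qpoch_inf :: "real \<Rightarrow> real \<Rightarrow> real" where
  "qpoch_inf \<beta> q = (\<Prod>k. 1 - \<beta> * q ^ k)"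

definition jackson_integral_0_inf_has :: "real \<Rightarrow> (real \<Rightarrow> complex) \<Rightarrow> complex \<Rightarrow> bool" where
  "jackson_integral_0_inf_has q f I \<longleftrightarrow>
     ((\<lambda>j::int. complex_of_real ((1 - q) * q powi j) * f (q powi j)) has_sum I) UNIV"

definition abs_cpow :: "real \<Rightarrow> complex \<Rightarrow> complex" where
  "abs_cpow x \<alpha> = exp (\<alpha> * complex_of_real (ln \<bar>x\<bar>))"

end

theory Submission
  imports Defs
begin

text \<open>
  On the lattice \<open>x\<^sub>j = q\<^sup>j\<close> the weight \<open>\<rho>\<^sub>j = Y\<^sup>j / (q\<^sup>j/a\<^sub>2; q)\<^sub>\<infinity>\<close>, with \<open>Y = q\<^sup>\<alpha>\<close>, satisfies the
  Pearson relation \<open>s q\<^sup>2 \<rho>\<^sub>j\<^sub>+\<^sub>1 = \<rho>\<^sub>j \<sigma>\<^sub>2(x\<^sub>j)/x\<^sub>j\<close>. Multiplied by \<open>(1 - q)\<^sup>2 x\<close>, the q-EHT operator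
  becomes a second-order difference operator which is triangular on monomials, so it has a
  polynomial eigenfunction of every degree \<open>n\<close>, with the pairwise distinct eigenvalues
  \<open>-\<sigma>\<^sub>2''(0)/2 (1 - q\<^sup>n)\<close>. By the Pearson relation, summation by parts over \<open>\<int>\<close> makes the
  operator symmetric for the inner product \<open>\<Sum>\<^sub>j \<rho>\<^sub>j x\<^sub>j p(x\<^sub>j) r(x\<^sub>j)\<close>, which is the Jackson
  integral up to the factor \<open>1 - q\<close>; hence eigenpolynomials of distinct degrees are orthogonal.
  All sums converge absolutely: as \<open>j \<rightarrow> \<infinity>\<close> because \<open>q Y < 1\<close>, and as \<open>j \<rightarrow> -\<infinity>\<close> because
  the Pochhammer factor grows faster than any power of \<open>q\<^sup>j\<close> when \<open>a\<^sub>2 < 0\<close>.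
\<close>

section \<open>The q-EHT as a difference operator and its eigenpolynomials\<close>

lemma poly_pcompose_dilation [simp]: "poly (p \<circ>\<^sub>p [:0, a:]) x = poly p (a * x)"
  by (simp add: poly_pcompose mult.commute)

text \<open>\<open>[:A, B:]\<close> stands for \<open>\<sigma>\<^sub>2(x)/x\<close> and \<open>s\<close> for \<open>\<sigma>\<^sub>1'(0)\<close>.\<close>

definition qEHT_op :: "real \<Rightarrow> real \<Rightarrow> real \<Rightarrow> real \<Rightarrow> real poly \<Rightarrow> real poly" where
  "qEHT_op s q A B p = smult (s * q^2) (p \<circ>\<^sub>p [:0, 1/q:] - p) - [:A, B:] * (p - p \<circ>\<^sub>p [:0, q:])"

definition qEHT_op_diag :: "real \<Rightarrow> real \<Rightarrow> real \<Rightarrow> nat \<Rightarrow> real" where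
  "qEHT_op_diag s q A k = s * q^2 * ((1/q)^k - 1) - A * (1 - q^k)"

lemma coeff_qEHT_op_0 [simp]: "coeff (qEHT_op s q A B p) 0 = 0"
  by (simp add: qEHT_op_def coeff_pcompose_linear poly_0_coeff_0)

lemma coeff_qEHT_op_Suc:
  "coeff (qEHT_op s q A B p) (Suc i)
     = qEHT_op_diag s q A (Suc i) * coeff p (Suc i) - B * (1 - q^i) * coeff p i"
  by (simp add: qEHT_op_def qEHT_op_diag_def coeff_pcompose_linear coeff_pCons
      algebra_simps del: power_Suc)

text \<open>The eigenvalue equation is a two-term recursion for the coefficients (see
  \<open>coeff_qEHT_op_Suc\<close>), solved downwards from the leading coefficient \<open>1\<close>.\<close>

fun eigen_coeff_from_top :: "real \<Rightarrow> real \<Rightarrow> real \<Rightarrow> real \<Rightarrow> nat \<Rightarrow> nat \<Rightarrow> real" where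
  "eigen_coeff_from_top s q A B n 0 = 1"
| "eigen_coeff_from_top s q A B n (Suc d) =
     qEHT_op_diag s q A (n - d) * eigen_coeff_from_top s q A B n d / (B * (q^n - q^(n - Suc d)))"

definition eigen_coeff :: "real \<Rightarrow> real \<Rightarrow> real \<Rightarrow> real \<Rightarrow> nat \<Rightarrow> nat \<Rightarrow> real" where
  "eigen_coeff s q A B n i = (if i \<le> n then eigen_coeff_from_top s q A B n (n - i) else 0)"

definition eigenpoly :: "real \<Rightarrow> real \<Rightarrow> real \<Rightarrow> real \<Rightarrow> nat \<Rightarrow> real poly" where
  "eigenpoly s q A B n = (\<Sum>i\<le>n. monom (eigen_coeff s q A B n i) i)"

lemma coeff_eigenpoly: "coeff (eigenpoly s q A B n) i = eigen_coeff s q A B n i"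
  by (simp add: eigenpoly_def coeff_sum eigen_coeff_def)

lemma eigen_coeff_rec:
  assumes "i < n"
  shows "eigen_coeff s q A B n i
           = qEHT_op_diag s q A (Suc i) * eigen_coeff s q A B n (Suc i) / (B * (q^n - q^i))"
proof -
  have "n - i = Suc (n - Suc i)" "n - (n - Suc i) = Suc i" "n - Suc (n - Suc i) = i"
    using assms by auto
  then show ?thesis
    using assms by (simp add: eigen_coeff_def)
qed

lemma degree_eigenpoly: "degree (eigenpoly s q A B n) = n"
proof (rule antisym)
  show "degree (eigenpoly s q A B n) \<le> n"
    by (rule degree_le) (simp add: coeff_eigenpoly eigen_coeff_def)
  show "n \<le> degree (eigenpoly s q A B n)"
    by (rule le_degree) (simp add: coeff_eigenpoly eigen_coeff_def)
qed

lemma eigenpoly_nonzero: "eigenpoly s q A B n \<noteq> 0"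
proof -
  have "coeff (eigenpoly s q A B n) n = 1"
    by (simp add: coeff_eigenpoly eigen_coeff_def)
  then show ?thesis
    by auto
qed

lemma qEHT_op_eigenpoly:
  assumes q: "0 < q" "q < 1" and B: "B \<noteq> 0"
  shows "qEHT_op s q A B (eigenpoly s q A B n)
           = smult (- B * (1 - q^n)) (pCons 0 (eigenpoly s q A B n))"
proof (rule poly_eqI)
  fix k
  let ?c = "eigen_coeff s q A B n"
  show "coeff (qEHT_op s q A B (eigenpoly s q A B n)) k
          = coeff (smult (- B * (1 - q^n)) (pCons 0 (eigenpoly s q A B n))) k"
  proof (cases k)
    case (Suc i)
    have "qEHT_op_diag s q A (Suc i) * ?c (Suc i) - B * (1 - q^i) * ?c i = - B * (1 - q^n) * ?c i"
    proof (cases "i < n")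
      case True
      then have "q^i \<noteq> q^n"
        using q by (metis nat_neq_iff power_strict_decreasing_iff)
      then have "B * (q^n - q^i) \<noteq> 0"
        using B by simp
      then show ?thesis
        using eigen_coeff_rec[OF True, of s q A B] by (simp add: field_simps)
    qed (cases "i = n"; auto simp: eigen_coeff_def)
    then show ?thesis
      by (simp add: Suc coeff_qEHT_op_Suc coeff_eigenpoly)
  qed simp
qed

lemma qEHT_lhs_eq_qEHT_op:
  assumes q: "0 < q" "q < 1" and x: "x \<noteq> 0"
  shows "poly [:0, s:] x * qD (1/q) (qD q (poly p)) x + poly [:t0, t:] x * qD q (poly p) x
           = poly (qEHT_op s q (s*q + (q-1)*t0) ((q-1)*t) p) x / ((1-q)^2 * x)"
proof -
  define u v w where "u = poly p (x / q)" and "v = poly p x" and "w = poly p (q * x)"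
  define r where "r = 1 - q"
  have nz: "q \<noteq> 0" "r \<noteq> 0" "x / q \<noteq> 0" and qr: "1 - 1/q = - r / q" "q * (x / q) = x"
    using q x by (auto simp: r_def field_simps)
  have L: "qD (1/q) (qD q (poly p)) x = ((v - w) / (r * x) - (u - v) / (r * (x/q))) / (- r / q * x)"
    and D: "qD q (poly p) x = (v - w) / (r * x)"
    using x nz qr by (simp_all add: qD_def u_def v_def w_def r_def)
  have E: "poly (qEHT_op s q (s*q + (q-1)*t0) ((q-1)*t) p) x
                   = s*q^2*(u - v) - (s*q - r*t0 - r*t*x) * (v - w)"
    by (simp add: qEHT_op_def u_def v_def w_def r_def algebra_simps)
  show ?thesis
    unfolding L D E r_def[symmetric] using nz by (simp add: field_simps power2_eq_square)
qed

lemma qEHT_lambda_linear_sigma1: "qEHT_lambda q [:0, s:] [:t0, t:] n = - ((1 - q^n) / (1 - q)) * t"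
  by (simp add: qEHT_lambda_def qnum_def numeral_2_eq_2)

lemma deriv_poly_0: "deriv (poly p) 0 = coeff p 1"
  by (simp add: DERIV_imp_deriv[OF poly_DERIV] poly_0_coeff_0 coeff_pderiv)

lemma qEHT_solution_if_qEHT_op_eigen:
  assumes q: "0 < q" "q < 1"
    and eig: "qEHT_op s q (s*q + (q-1)*t0) ((q-1)*t) p = smult (- ((q-1)*t) * (1 - q^n)) (pCons 0 p)"
  shows "qEHT_solution q [:0, s:] [:t0, t:] (qEHT_lambda q [:0, s:] [:t0, t:] n) (poly p)"
  unfolding qEHT_solution_def qEHT_lambda_linear_sigma1
proof
  fix x
  have nz: "1 - q \<noteq> 0"
    using q by simp
  show "poly [:0, s:] x * qD (1/q) (qD q (poly p)) x + poly [:t0, t:] x * qD q (poly p) x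
          + - ((1 - q^n) / (1 - q)) * t * poly p x = 0"
  proof (cases "x = 0")
    case False
    have "poly [:0, s:] x * qD (1/q) (qD q (poly p)) x + poly [:t0, t:] x * qD q (poly p) x
            = poly (qEHT_op s q (s*q + (q-1)*t0) ((q-1)*t) p) x / ((1-q)^2 * x)"
      by (rule qEHT_lhs_eq_qEHT_op[OF q False])
    also have "\<dots> = (1 - q^n) / (1 - q) * t * poly p x"
    proof -
      have "poly (qEHT_op s q (s*q + (q-1)*t0) ((q-1)*t) p) x
              = ((1-q)^2 * x) * ((1 - q^n) / (1 - q) * t * poly p x)"
        unfolding eig using nz by (simp add: power2_eq_square field_simps)
      then show ?thesis
        using False nz by simp
    qed
    finally show ?thesis
      by simp
  next
    case True
    txt \<open>At \<open>x = 0\<close> only \<open>\<tau>(0) p'(0) + \<lambda> p(0)\<close> survives; it is the coefficient of \<open>x\<close> in \<open>eig\<close>.\<close>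
    have "qEHT_op_diag s q (s*q + (q-1)*t0) (Suc 0) = (1-q)^2 * t0"
      using q by (simp add: qEHT_op_diag_def power2_eq_square field_simps)
    then have "(1-q)^2 * t0 * coeff p 1 = coeff (qEHT_op s q (s*q + (q-1)*t0) ((q-1)*t) p) (Suc 0)"
      unfolding coeff_qEHT_op_Suc by simp
    also have "\<dots> = (1-q) * t * (1 - q^n) * coeff p 0"
      unfolding eig by (simp add: algebra_simps)
    finally have "(1-q) * ((1-q) * (t0 * coeff p 1)) = (1-q) * (t * (1 - q^n) * coeff p 0)"
      by (simp add: power2_eq_square mult_ac)
    then have "(1-q) * (t0 * coeff p 1) = t * (1 - q^n) * coeff p 0"
      using nz mult_left_cancel by blast
    then have "t0 * coeff p 1 = (1 - q^n) / (1 - q) * t * coeff p 0"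
      using nz by (simp add: field_simps)
    then show ?thesis
      using True by (simp add: qD_def deriv_poly_0 poly_0_coeff_0)
  qed
qed

section \<open>The q-Pochhammer symbol and sums over the integers\<close>

lemma convergent_prod_qpoch:
  fixes q \<beta> :: real
  assumes q: "0 < q" "q < 1" and \<beta>: "\<beta> \<le> 0"
  shows "convergent_prod (\<lambda>k. 1 - \<beta> * q ^ k)"
proof -
  have "summable (\<lambda>k. \<bar>- \<beta> * q ^ k\<bar>)"
    using q by (simp add: abs_mult summable_geometric)
  moreover have "- \<beta> * q ^ k \<noteq> -1" for k
    using q \<beta> mult_nonpos_nonneg[of \<beta> "q ^ k"] by simp
  ultimately show ?thesis
    using summable_imp_convergent_prod_real[of "\<lambda>k. - \<beta> * q ^ k"] by simp
qed

lemma one_le_qpoch_inf: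
  assumes q: "0 < q" "q < 1" and \<beta>: "\<beta> \<le> 0"
  shows "1 \<le> qpoch_inf \<beta> q"
  unfolding qpoch_inf_def
proof (rule prodinf_nonneg)
  show "(\<lambda>k. 1 - \<beta> * q ^ k) has_prod (\<Prod>k. 1 - \<beta> * q ^ k)"
    using convergent_prod_qpoch[OF q \<beta>] by (rule convergent_prod_has_prod)
  show "1 \<le> 1 - \<beta> * q ^ k" for k
    using q \<beta> by (simp add: mult_nonpos_nonneg)
qed

lemma qpoch_inf_rec:
  assumes q: "0 < q" "q < 1" and \<beta>: "\<beta> \<le> 0"
  shows "qpoch_inf \<beta> q = (1 - \<beta>) * qpoch_inf (\<beta> * q) q"
proof -
  have "qpoch_inf (\<beta> * q) q = (\<Prod>k. 1 - \<beta> * q ^ Suc k)"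
    unfolding qpoch_inf_def by (simp add: mult.assoc)
  also have "\<dots> = qpoch_inf \<beta> q / (1 - \<beta> * q ^ 0)"
    unfolding qpoch_inf_def
    by (rule prodinf_split_head[where f = "\<lambda>k. 1 - \<beta> * q ^ k"])
       (use convergent_prod_qpoch[OF q \<beta>] \<beta> in auto)
  finally show ?thesis
    using \<beta> by simp
qed

lemma abs_poly_le_max_one_power:
  fixes p :: "real poly"
  shows "\<bar>poly p x\<bar> \<le> (\<Sum>i\<le>degree p. \<bar>coeff p i\<bar>) * max 1 \<bar>x\<bar> ^ degree p"
proof -
  have "\<bar>poly p x\<bar> \<le> (\<Sum>i\<le>degree p. \<bar>coeff p i * x ^ i\<bar>)"
    unfolding poly_altdef by (rule sum_abs)
  also have "\<dots> \<le> (\<Sum>i\<le>degree p. \<bar>coeff p i\<bar> * max 1 \<bar>x\<bar> ^ degree p)"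
  proof (rule sum_mono)
    fix i assume "i \<in> {..degree p}"
    then have "\<bar>x\<bar> ^ i \<le> max 1 \<bar>x\<bar> ^ degree p"
      by (meson atMost_iff le_max_iff_disj order.trans order_refl power_increasing power_mono
          abs_ge_zero)
    then show "\<bar>coeff p i * x ^ i\<bar> \<le> \<bar>coeff p i\<bar> * max 1 \<bar>x\<bar> ^ degree p"
      by (simp add: abs_mult power_abs mult_left_mono)
  qed
  also have "\<dots> = (\<Sum>i\<le>degree p. \<bar>coeff p i\<bar>) * max 1 \<bar>x\<bar> ^ degree p"
    by (simp add: sum_distrib_right)
  finally show ?thesis .
qed

lemma summable_on_UNIV_int:
  fixes f :: "int \<Rightarrow> 'a::banach"
  assumes "summable (\<lambda>k. norm (f (int k)))" and "summable (\<lambda>k. norm (f (- int (Suc k))))"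
  shows "f summable_on UNIV"
proof -
  have "(f \<circ> int) summable_on UNIV" and "(f \<circ> (\<lambda>k. - int (Suc k))) summable_on UNIV"
    using assms[THEN norm_summable_imp_summable_on] by (simp_all add: o_def)
  then have "f summable_on range int" and "f summable_on range (\<lambda>k. - int (Suc k))"
    by (simp_all add: summable_on_reindex inj_on_def)
  then have "f summable_on (range int \<union> range (\<lambda>k. - int (Suc k)))"
    by (rule summable_on_Un_disjoint) auto
  moreover have "range int \<union> range (\<lambda>k. - int (Suc k)) = UNIV"
  proof -
    have "j \<in> range int \<or> j = - int (Suc (nat (- j - 1)))" for j :: int
      by (cases "0 \<le> j") (auto simp: image_iff intro: exI[of _ "nat j"])
    then show ?thesis
      by blast
  qed
  ultimately show ?thesis
    by simp
qed

lemma qpowi_neg: "0 < q \<Longrightarrow> (q::real) powi (- int n) = (1/q) ^ n"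
  by (simp add: power_int_minus power_inverse divide_inverse)

lemma infsum_pos:
  fixes f :: "'a \<Rightarrow> real"
  assumes "f summable_on UNIV" and "\<And>j. 0 \<le> f j" and "0 < f k"
  shows "0 < infsum f UNIV"
proof -
  have "f k \<le> infsum f UNIV"
    using has_sum_mono_neutral[OF has_sum_finite[of "{k}" f] has_sum_infsum[OF assms(1)]] assms(2)
    by auto
  with assms(3) show ?thesis
    by simp
qed

lemma abs_cpow_qpowi:
  assumes "0 < q" and "exp (\<alpha> * complex_of_real (ln q)) = complex_of_real Y"
  shows "abs_cpow (q powi j) \<alpha> = complex_of_real (Y powi j)"
proof -
  have "q powi j = exp (of_int j * ln q)"
    using assms(1) exp_power_int[of "ln q" j] by simp
  then have "ln (q powi j) = of_int j * ln q"
    by simp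
  then have "abs_cpow (q powi j) \<alpha> = exp (\<alpha> * complex_of_real (ln q)) powi j"
    unfolding abs_cpow_def using assms(1) by (simp add: exp_power_int mult_ac)
  then show ?thesis
    unfolding assms(2) by simp
qed

section \<open>The weight on the lattice \<open>q\<^sup>\<int>\<close> and orthogonality\<close>

locale q_lattice_weight =
  fixes q Y a2 :: real
  assumes q_pos: "0 < q" and q_less_1: "q < 1"
    and Y_pos: "0 < Y" and qY_less_1: "q * Y < 1"
    and a2_neg: "a2 < 0"
begin

text \<open>The weight \<open>\<rho>\<close> at the lattice point \<open>q\<^sup>j\<close>, where \<open>|q\<^sup>j|\<^sup>\<alpha> = Y\<^sup>j\<close>.\<close>

definition weight :: "int \<Rightarrow> real" where
  "weight j = Y powi j / qpoch_inf (q powi j / a2) q"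

lemma qpowi_div_a2_nonpos: "q powi j / a2 \<le> 0"
  using q_pos a2_neg by (simp add: divide_nonneg_neg)

lemma weight_pos: "0 < weight j"
  unfolding weight_def using one_le_qpoch_inf[OF q_pos q_less_1 qpowi_div_a2_nonpos, of j] Y_pos
  by simp

lemma weight_succ: "weight (j + 1) = weight j * poly [:Y, - Y / a2:] (q powi j)"
proof -
  have rec: "qpoch_inf (q powi j / a2) q = (1 - q powi j / a2) * qpoch_inf (q powi (j + 1) / a2) q"
    using qpoch_inf_rec[OF q_pos q_less_1 qpowi_div_a2_nonpos, of j] q_pos
    by (simp add: power_int_add_1 mult_ac)
  have "1 - q powi j / a2 \<noteq> 0" "qpoch_inf (q powi (j + 1) / a2) q \<noteq> 0"
    using qpowi_div_a2_nonpos[of j] one_le_qpoch_inf[OF q_pos q_less_1 qpowi_div_a2_nonpos, of "j + 1"]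
    by auto
  moreover have "Y powi (j + 1) = Y powi j * Y"
    using Y_pos by (simp add: power_int_add_1)
  moreover have "poly [:Y, - Y / a2:] (q powi j) = Y * (1 - q powi j / a2)"
    by (simp add: algebra_simps)
  ultimately show ?thesis
    unfolding weight_def rec by auto
qed

lemma weight_nat_le: "weight (int n) \<le> Y ^ n"
  unfolding weight_def
  using one_le_qpoch_inf[OF q_pos q_less_1 qpowi_div_a2_nonpos, of "int n"] Y_pos
  by (simp add: divide_le_eq mult_le_cancel_left1)

text \<open>Towards \<open>j \<rightarrow> -\<infinity>\<close> the ratio \<open>weight j / weight (j + 1) = 1 / (Y - Y q\<^sup>j / a\<^sub>2)\<close> tends to \<open>0\<close>.\<close>

lemma summable_weight_neg_power: "summable (\<lambda>k. weight (- int (Suc k)) * ((1/q) ^ Suc k) ^ N)"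
proof -
  define X where "X k = (1/q) ^ Suc k" for k
  define v where "v k = weight (- int (Suc k)) * X k ^ N" for k
  define K where "K = - Y / a2"
  have K: "0 < K"
    unfolding K_def using Y_pos a2_neg by (simp add: divide_pos_neg)
  have q1: "1 < 1/q"
    using q_pos q_less_1 by simp
  obtain k0 where k0: "2 / (K * q ^ N) < (1/q) ^ k0"
    using real_arch_pow[OF q1] by blast
  have "summable v"
  proof (rule summable_ratio_test[where c = "1/2" and N = k0])
    fix k assume "k0 \<le> k"
    have "weight (- int (Suc k)) = weight (- int (Suc (Suc k))) * (Y + K * X (Suc k))"
      using weight_succ[of "- int (Suc (Suc k))"] qpowi_neg[OF q_pos, of "Suc (Suc k)"]
      by (simp add: X_def K_def algebra_simps)
    moreover have "X k = q * X (Suc k)"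
      unfolding X_def using q_pos by simp
    ultimately have vk: "v k = v (Suc k) * ((Y + K * X (Suc k)) * q ^ N)"
      unfolding v_def by (simp add: power_mult_distrib mult_ac)
    have "2 < K * q ^ N * (1/q) ^ k0"
      using k0 K q_pos by (simp add: divide_less_eq mult_ac)
    also have "\<dots> \<le> K * q ^ N * X (Suc k)"
      unfolding X_def using q1 \<open>k0 \<le> k\<close> K q_pos by (intro mult_left_mono power_increasing) auto
    finally have "2 < K * q ^ N * X (Suc k)" .
    moreover have "0 \<le> Y * q ^ N"
      using Y_pos q_pos by simp
    ultimately have "2 \<le> (Y + K * X (Suc k)) * q ^ N"
      by (simp add: algebra_simps)
    moreover have v_nonneg: "0 \<le> v (Suc k)"
      unfolding v_def X_def using weight_pos q_pos by (simp add: less_imp_le)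
    ultimately have "2 * v (Suc k) \<le> v k"
      unfolding vk by (metis mult_left_mono mult.commute)
    then show "norm (v (Suc k)) \<le> 1/2 * norm (v k)"
      using v_nonneg by simp
  qed simp
  then show ?thesis
    unfolding v_def X_def .
qed

lemma weighted_poly_summable:
  assumes r0: "poly r 0 = 0"
  shows "(\<lambda>j. weight j * poly r (q powi j)) summable_on UNIV"
proof -
  obtain r' where r': "\<And>x. poly r x = x * poly r' x"
    using r0 by (cases r) auto
  define M where "M = (\<Sum>i\<le>degree r'. \<bar>coeff r' i\<bar>)"
  define N where "N = degree r'"
  have bound: "\<bar>poly r' x\<bar> \<le> M * max 1 \<bar>x\<bar> ^ N" for x
    unfolding M_def N_def by (rule abs_poly_le_max_one_power)
  have M: "0 \<le> M"
    unfolding M_def by (simp add: sum_nonneg)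
  show ?thesis
  proof (rule summable_on_UNIV_int)
    show "summable (\<lambda>k. norm (weight (int k) * poly r (q powi int k)))"
    proof (rule summable_comparison_test)
      show "summable (\<lambda>k. M * (q * Y) ^ k)"
        using q_pos Y_pos qY_less_1 by (intro summable_mult summable_geometric) simp
      show "\<exists>N0. \<forall>k\<ge>N0. norm (norm (weight (int k) * poly r (q powi int k))) \<le> M * (q * Y) ^ k"
      proof (intro exI allI impI)
        fix k :: nat
        have "\<bar>poly r' (q ^ k)\<bar> \<le> M"
          using bound[of "q ^ k"] q_pos q_less_1 by (simp add: power_le_one)
        then have "weight (int k) * (q ^ k * \<bar>poly r' (q ^ k)\<bar>) \<le> Y ^ k * (q ^ k * M)"
          using weight_nat_le weight_pos q_pos Y_pos
          by (intro mult_mono mult_left_mono) (auto simp: less_imp_le)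
        then show "norm (norm (weight (int k) * poly r (q powi int k))) \<le> M * (q * Y) ^ k"
          using weight_pos[of "int k"] q_pos
          by (simp add: r' abs_mult power_mult_distrib mult_ac)
      qed
    qed
    show "summable (\<lambda>k. norm (weight (- int (Suc k)) * poly r (q powi (- int (Suc k)))))"
    proof (rule summable_comparison_test)
      show "summable (\<lambda>k. M * (weight (- int (Suc k)) * ((1/q) ^ Suc k) ^ Suc N))"
        by (intro summable_mult summable_weight_neg_power)
      show "\<exists>N0. \<forall>k\<ge>N0. norm (norm (weight (- int (Suc k)) * poly r (q powi (- int (Suc k)))))
              \<le> M * (weight (- int (Suc k)) * ((1/q) ^ Suc k) ^ Suc N)"
      proof (intro exI allI impI)
        fix k :: nat
        define x where "x = (1/q) ^ Suc k"
        have x: "1 \<le> x"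
          unfolding x_def using q_pos q_less_1 by (intro one_le_power) simp
        then have "x * \<bar>poly r' x\<bar> \<le> x * (M * x ^ N)"
          using bound[of x] by (simp add: mult_left_mono)
        then show "norm (norm (weight (- int (Suc k)) * poly r (q powi (- int (Suc k)))))
                     \<le> M * (weight (- int (Suc k)) * ((1/q) ^ Suc k) ^ Suc N)"
          using weight_pos[of "- int (Suc k)"] x
          unfolding qpowi_neg[OF q_pos] x_def[symmetric]
          by (simp add: r' abs_mult mult_left_mono mult_ac)
      qed
    qed
  qed
qed

text \<open>\<open>(1 - q) * lattice_inner p r\<close> is the Jackson integral of \<open>p r \<rho>\<close>: the factor \<open>x\<close> introduced
  by \<open>pCons 0\<close> is the Jackson measure \<open>q\<^sup>j\<close> (see \<open>jackson_integral_weight\<close>).\<close>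

definition lattice_inner :: "real poly \<Rightarrow> real poly \<Rightarrow> real" where
  "lattice_inner p r = (\<Sum>\<^sub>\<infinity>j. weight j * poly (pCons 0 (p * r)) (q powi j))"

definition dirichlet_form :: "real poly \<Rightarrow> real poly \<Rightarrow> real" where
  "dirichlet_form p r = (\<Sum>\<^sub>\<infinity>j. weight (j + 1) * (poly p (q powi j) - poly p (q * q powi j))
                                               * (poly r (q powi j) - poly r (q * q powi j)))"

lemma lattice_inner_commute: "lattice_inner p r = lattice_inner r p"
  by (simp add: lattice_inner_def mult.commute)

lemma dirichlet_form_commute: "dirichlet_form p r = dirichlet_form r p"
  by (simp add: dirichlet_form_def mult_ac)

lemma lattice_inner_summable: "(\<lambda>j. weight j * poly (pCons 0 (p * r)) (q powi j)) summable_on UNIV"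
  by (rule weighted_poly_summable) simp

text \<open>By the Pearson relation \<open>s q\<^sup>2 weight (j + 1) = weight j (A + B q\<^sup>j)\<close>, the \<open>j\<close>-th term is
  \<open>s q\<^sup>2 (U (j - 1) - V j)\<close> for two summable sequences \<open>U\<close>, \<open>V\<close>; shifting the index of \<open>U\<close> and
  regrouping gives the Dirichlet form.\<close>

lemma sum_qEHT_op_by_parts:
  assumes A: "s * q^2 * Y = A" and B: "s * q^2 * (- Y / a2) = B"
  shows "(\<Sum>\<^sub>\<infinity>j. weight j * poly (r * qEHT_op s q A B p) (q powi j)) = - (s * q^2) * dirichlet_form p r"
proof -
  define x where "x j = q powi j" for j
  define U where "U j = weight (j + 1) * (poly p (x j) - poly p (q * x j)) * poly r (q * x j)" for j
  define V where "V j = weight (j + 1) * (poly p (x j) - poly p (q * x j)) * poly r (x j)" for j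
  have U_eq: "U = (\<lambda>j. weight j * poly ([:Y, - Y / a2:] * (p - p \<circ>\<^sub>p [:0, q:]) * r \<circ>\<^sub>p [:0, q:]) (q powi j))"
    by (simp add: fun_eq_iff U_def x_def weight_succ algebra_simps diff_divide_distrib add_divide_distrib)
  have "U summable_on UNIV"
    unfolding U_eq by (rule weighted_poly_summable) simp
  then have U: "(U has_sum infsum U UNIV) UNIV"
    by simp
  have V_eq: "V = (\<lambda>j. weight j * poly ([:Y, - Y / a2:] * (p - p \<circ>\<^sub>p [:0, q:]) * r) (q powi j))"
    by (simp add: fun_eq_iff V_def x_def weight_succ algebra_simps diff_divide_distrib add_divide_distrib)
  have "V summable_on UNIV"
    unfolding V_eq by (rule weighted_poly_summable) simp
  then have V: "(V has_sum infsum V UNIV) UNIV"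
    by simp
  have "bij_betw (\<lambda>j::int. j - 1) UNIV UNIV"
    by (rule bij_betwI[where g = "\<lambda>j. j + 1"]) auto
  then have U_shift: "((\<lambda>j. U (j - 1)) has_sum infsum U UNIV) UNIV"
    using U has_sum_reindex_bij_betw by blast
  have by_parts: "weight j * poly (r * qEHT_op s q A B p) (x j) = s * q^2 * (U (j - 1) - V j)" for j
  proof -
    have "x (j - 1) = x j / q" "q * (x j / q) = x j"
      unfolding x_def using q_pos by (simp_all add: power_int_diff)
    then have U': "s * q^2 * U (j - 1) = s * q^2 * weight j * (poly p (x j / q) - poly p (x j)) * poly r (x j)"
      unfolding U_def by simp
    have "s * q^2 * weight (j + 1) = weight j * (A + B * x j)"
      unfolding weight_succ A[symmetric] B[symmetric] x_def by (simp add: algebra_simps)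
    then have V': "s * q^2 * V j = weight j * (A + B * x j) * (poly p (x j) - poly p (q * x j)) * poly r (x j)"
      unfolding V_def by (metis mult.assoc)
    have "s * q^2 * (U (j - 1) - V j) = s * q^2 * U (j - 1) - s * q^2 * V j"
      by (simp add: right_diff_distrib)
    also have "\<dots> = weight j * poly r (x j) * (s * q^2 * (poly p (x j / q) - poly p (x j))
                        - (A + B * x j) * (poly p (x j) - poly p (q * x j)))"
      unfolding U' V' by (simp add: algebra_simps)
    also have "\<dots> = weight j * poly (r * qEHT_op s q A B p) (x j)"
      by (simp add: qEHT_op_def algebra_simps)
    finally show ?thesis ..
  qed
  have "((\<lambda>j. s * q^2 * (U (j - 1) - V j)) has_sum s * q^2 * (infsum U UNIV - infsum V UNIV)) UNIV"
    using has_sum_add[OF U_shift has_sum_uminusI[OF V]] by (intro has_sum_cmult_right) simp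
  then have "(\<Sum>\<^sub>\<infinity>j. weight j * poly (r * qEHT_op s q A B p) (q powi j))
               = s * q^2 * (infsum U UNIV - infsum V UNIV)"
    unfolding by_parts[unfolded x_def, symmetric] by (rule infsumI)
  moreover have "infsum V UNIV - infsum U UNIV = dirichlet_form p r"
  proof -
    have "((\<lambda>j. V j + - U j) has_sum (infsum V UNIV + - infsum U UNIV)) UNIV"
      by (intro has_sum_add V has_sum_uminusI U)
    then show ?thesis
      unfolding dirichlet_form_def by (simp add: infsumI U_def V_def x_def algebra_simps)
  qed
  ultimately show ?thesis
    by (simp add: algebra_simps)
qed

lemma lattice_inner_eigen_orthogonal:
  assumes A: "s * q^2 * Y = A" and B: "s * q^2 * (- Y / a2) = B"
    and p: "qEHT_op s q A B p = smult \<mu> (pCons 0 p)"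
    and r: "qEHT_op s q A B r = smult \<nu> (pCons 0 r)"
    and "\<mu> \<noteq> \<nu>"
  shows "lattice_inner p r = 0"
proof -
  have "\<mu> * lattice_inner p r = - (s * q^2) * dirichlet_form p r"
    using sum_qEHT_op_by_parts[OF A B, of r p]
    by (simp add: p lattice_inner_def infsum_cmult_right' algebra_simps)
  moreover have "\<nu> * lattice_inner r p = - (s * q^2) * dirichlet_form r p"
    using sum_qEHT_op_by_parts[OF A B, of p r]
    by (simp add: r lattice_inner_def infsum_cmult_right' algebra_simps)
  ultimately have "(\<mu> - \<nu>) * lattice_inner p r = 0"
    by (simp add: lattice_inner_commute dirichlet_form_commute algebra_simps)
  with \<open>\<mu> \<noteq> \<nu>\<close> show ?thesis
    by simp
qed

lemma poly_nonzero_at_lattice: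
  assumes "p \<noteq> 0"
  shows "\<exists>j. poly p (q powi j) \<noteq> 0"
proof (rule ccontr)
  assume "\<not> ?thesis"
  then have "range (\<lambda>j::int. q powi j) \<subseteq> {x. poly p x = 0}"
    by auto
  then have "finite (range (\<lambda>j::int. q powi j))"
    using poly_roots_finite[OF assms] finite_subset by blast
  moreover have "inj (\<lambda>j::int. q powi j)"
    unfolding inj_def using q_pos q_less_1
    by (metis linorder_neq_iff power_int_strict_decreasing order_less_irrefl)
  ultimately show False
    using finite_imageD by fastforce
qed

lemma lattice_inner_pos:
  assumes "p \<noteq> 0"
  shows "0 < lattice_inner p p"
proof -
  obtain k where "poly p (q powi k) \<noteq> 0"
    using poly_nonzero_at_lattice[OF assms] by blast
  then have pos: "0 < weight k * poly (pCons 0 (p * p)) (q powi k)"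
    using weight_pos[of k] q_pos by (simp add: power2_eq_square[symmetric])
  have nonneg: "0 \<le> weight j * poly (pCons 0 (p * p)) (q powi j)" for j
    using weight_pos[of j] q_pos by simp
  show ?thesis
    unfolding lattice_inner_def by (rule infsum_pos[OF lattice_inner_summable nonneg pos])
qed

lemma jackson_integral_weight:
  assumes "exp (\<alpha> * complex_of_real (ln q)) = complex_of_real Y"
  shows "jackson_integral_0_inf_has q
           (\<lambda>x. complex_of_real (poly p x * poly r x)
                 * (abs_cpow x \<alpha> / complex_of_real (qpoch_inf (x / a2) q)))
           (complex_of_real ((1 - q) * lattice_inner p r))"
proof -
  have "((\<lambda>j. (1 - q) * (weight j * poly (pCons 0 (p * r)) (q powi j)))
          has_sum (1 - q) * lattice_inner p r) UNIV"
    unfolding lattice_inner_def using lattice_inner_summable by (intro has_sum_cmult_right) simp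
  then have "((\<lambda>j. complex_of_real ((1 - q) * (weight j * poly (pCons 0 (p * r)) (q powi j))))
               has_sum complex_of_real ((1 - q) * lattice_inner p r)) UNIV"
    by (rule has_sum_of_real)
  moreover have "(\<lambda>j. complex_of_real ((1 - q) * q powi j)
                   * (complex_of_real (poly p (q powi j) * poly r (q powi j))
                      * (abs_cpow (q powi j) \<alpha> / complex_of_real (qpoch_inf (q powi j / a2) q))))
                 = (\<lambda>j. complex_of_real ((1 - q) * (weight j * poly (pCons 0 (p * r)) (q powi j))))"
    unfolding abs_cpow_qpowi[OF q_pos assms] weight_def by (simp add: mult_ac)
  ultimately show ?thesis
    unfolding jackson_integral_0_inf_has_def by simp
qed

lemma lattice_inner_eigenpoly_orthogonal:
  assumes A: "s * q^2 * Y = A" and B: "s * q^2 * (- Y / a2) = B" "B \<noteq> 0" and "m \<noteq> n"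
  shows "lattice_inner (eigenpoly s q A B n) (eigenpoly s q A B m) = 0"
proof (rule lattice_inner_eigen_orthogonal[OF A B(1) qEHT_op_eigenpoly[OF q_pos q_less_1 B(2)]
                                        qEHT_op_eigenpoly[OF q_pos q_less_1 B(2)]])
  have "q ^ n \<noteq> q ^ m"
    using \<open>m \<noteq> n\<close> q_pos q_less_1 by (metis nat_neq_iff power_strict_decreasing_iff)
  then show "- B * (1 - q^n) \<noteq> - B * (1 - q^m)"
    using B(2) by simp
qed

lemma jackson_integral_eigenpoly:
  assumes "exp (\<alpha> * complex_of_real (ln q)) = complex_of_real Y"
    and A: "s * q^2 * Y = A" and B: "s * q^2 * (- Y / a2) = B" "B \<noteq> 0"
  defines "P \<equiv> eigenpoly s q A B"
  shows "jackson_integral_0_inf_has q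
           (\<lambda>x. complex_of_real (poly (P n) x * poly (P m) x)
                 * (abs_cpow x \<alpha> / complex_of_real (qpoch_inf (x / a2) q)))
           (if m = n then complex_of_real ((1 - q) * lattice_inner (P n) (P n)) else 0)"
  using jackson_integral_weight[OF assms(1), of "P n" "P m"]
    lattice_inner_eigenpoly_orthogonal[OF A B, of m n]
  unfolding P_def by (cases "m = n") simp_all

end

lemma q_lattice_weight_from_coeffs:
  assumes q: "0 < q" "q < 1" and s: "s \<noteq> 0" and A: "A \<noteq> 0" and B: "B \<noteq> 0"
    and a2: "a2 = - A / B" "a2 < 0" and qY: "0 < A / (s * q)" "A / (s * q) < 1"
  defines "Y \<equiv> A / (s * q^2)"
  shows "q_lattice_weight q Y a2"
    and "s * q^2 * Y = A" and "s * q^2 * (- Y / a2) = B"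
    and "- (q powi (-2) * B * a2) / s = Y"
proof -
  have "q * Y = A / (s * q)"
    using q by (simp add: Y_def power2_eq_square)
  then have "0 < q * Y" "q * Y < 1"
    using qY by simp_all
  then show "q_lattice_weight q Y a2"
    using q a2(2) by unfold_locales (auto simp: zero_less_mult_iff)
  show "s * q^2 * Y = A" and "s * q^2 * (- Y / a2) = B" and "- (q powi (-2) * B * a2) / s = Y"
    using q s A B by (simp_all add: Y_def a2(1) power_int_minus_divide field_simps)
qed

lemma coeff_sigma2_linear_sigma1:
  assumes "q \<noteq> 0"
  shows "coeff (sigma2 q [:0, s:] [:t0, t:]) 1 = s * q + (q - 1) * t0"
    and "coeff (sigma2 q [:0, s:] [:t0, t:]) 2 = (q - 1) * t"
  using assms by (simp_all add: sigma2_def numeral_2_eq_2 field_simps)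

theorem theorem5p14:
  fixes q s t t0 a2 :: real and \<alpha> :: complex and \<sigma>1 \<tau> :: "real poly"
  assumes q: "0 < q" "q < 1"
    and sig1: "\<sigma>1 = [:0, s:]" and s: "s \<noteq> 0"
    and tau: "\<tau> = [:t0, t:]" and t: "t \<noteq> 0"
    and sig2': "coeff (sigma2 q \<sigma>1 \<tau>) 1 \<noteq> 0"
    and a2_def: "a2 = - coeff (sigma2 q \<sigma>1 \<tau>) 1 / coeff (sigma2 q \<sigma>1 \<tau>) 2"
    and Lam: "t / s < 0"
    and a2_neg: "a2 < 0"
    and y0: "0 < q * ((1/q) * (1 + (1 - 1/q) * t0 / s))"
            "q * ((1/q) * (1 + (1 - 1/q) * t0 / s)) < 1"
    and alpha: "exp (\<alpha> * complex_of_real (ln q))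
                 = complex_of_real (- (q powi (-2) * coeff (sigma2 q \<sigma>1 \<tau>) 2 * a2) / s)"
  shows "\<exists>P :: nat \<Rightarrow> real poly. \<exists>d :: nat \<Rightarrow> real.
           \<forall>n. degree (P n) = n
             \<and> qEHT_solution q \<sigma>1 \<tau> (qEHT_lambda q \<sigma>1 \<tau> n) (poly (P n))
             \<and> d n \<noteq> 0
             \<and> (\<forall>m. jackson_integral_0_inf_has q
                    (\<lambda>x. complex_of_real (poly (P n) x * poly (P m) x)
                          * (abs_cpow x \<alpha> / complex_of_real (qpoch_inf (x / a2) q)))
                    (if m = n then complex_of_real (d n) else 0))"
proof -
  define A B where "A = coeff (sigma2 q \<sigma>1 \<tau>) 1" and "B = coeff (sigma2 q \<sigma>1 \<tau>) 2"
  define Y where "Y = A / (s * q^2)"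
  have AB: "A = s * q + (q - 1) * t0" "B = (q - 1) * t"
    unfolding A_def B_def sig1 tau using q by (intro coeff_sigma2_linear_sigma1; simp)+
  have "A / (s * q) = q * ((1/q) * (1 + (1 - 1/q) * t0 / s))"
    using q s by (simp add: AB field_simps)
  then have qY: "0 < A / (s * q)" "A / (s * q) < 1"
    using y0 by simp_all
  have A0: "A \<noteq> 0" and a2: "a2 = - A / B"
    using sig2' a2_def unfolding A_def B_def .
  have B0: "B \<noteq> 0"
    using q t by (simp add: AB)
  note W = q_lattice_weight_from_coeffs[OF q s A0 B0 a2 a2_neg qY, folded Y_def]
  interpret q_lattice_weight q Y a2
    by (rule W(1))
  have sol: "qEHT_solution q \<sigma>1 \<tau> (qEHT_lambda q \<sigma>1 \<tau> n) (poly (eigenpoly s q A B n))" for n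
    unfolding sig1 tau AB
    by (rule qEHT_solution_if_qEHT_op_eigen[OF q qEHT_op_eigenpoly[OF q]]) (use q t in simp)
  have norm: "(1 - q) * lattice_inner (eigenpoly s q A B n) (eigenpoly s q A B n) \<noteq> 0" for n
    using lattice_inner_pos[OF eigenpoly_nonzero[of s q A B n]] q by simp
  show ?thesis
    by (intro exI[of _ "eigenpoly s q A B"]
        exI[of _ "\<lambda>n. (1 - q) * lattice_inner (eigenpoly s q A B n) (eigenpoly s q A B n)"]
        allI conjI sol norm degree_eigenpoly
        jackson_integral_eigenpoly[OF alpha[folded B_def, unfolded W(4)] W(2,3) B0])
qed

end
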